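(* Let $s=(x,y,u,v)$ with $x,y,u,v\ge0$ and $x+y+u+v>4$, and write $W^k(s)=(x^{(k)},y^{(k)},u^{(k)},v^{(k)})$. (a) If there exists $k\ge0$ with $(x^{(k)}+y^{(k)})(u^{(k)}+v^{(k)})<4$, then $\lim_{n\to\infty}W^n(s)=(0,0,0,0)$. (b) If $\max\{\tfrac{xu}{4},\tfrac{yu}{16},\tfrac{yv}{9}\}>1$, then at least one coordinate of $W^n(s)$ tends to $+\infty$ as $n\to\infty$.
   Context: $W:\mathbb{R}^4\to\mathbb{R}^4$ is the map $W(x,y,u,v)=(x',y',u',v')$ with $x'=\tfrac12 xu+\tfrac14 yu$, $y'=\tfrac12 xv+\tfrac14 yu+\tfrac13 yv$, $u'=\tfrac12 xu+\tfrac12 xv+\tfrac14 yu+\tfrac13 yv$, $v'=\tfrac14 yu+\tfrac13 yv$. $W^k$ denotes the $k$-fold iterate ($W^0$ the identity). *)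

theory Defs
  imports "HOL-Analysis.Analysis"
begin

type_synonym state = "real \<times> real \<times> real \<times> real"

definition W :: "state \<Rightarrow> state" where
  "W s = (case s of (x, y, u, v) \<Rightarrow>
     (x * u/2 + y * u/4,
      x * v/2 + y * u/4 + y * v/3,
      x * u/2 + x * v/2 + y * u/4 + y * v/3,
      y * u/4 + y * v/3))"

definition cx :: "state \<Rightarrow> real" where "cx s = fst s"
definition cy :: "state \<Rightarrow> real" where "cy s = fst (snd s)"
definition cu :: "state \<Rightarrow> real" where "cu s = fst (snd (snd s))"
definition cv :: "state \<Rightarrow> real" where "cv s = snd (snd (snd s))"

end

theory Submission
  imports Defs
begin

text \<open>
  Put \<open>P(x, y, u, v) = (x + y)(u + v)\<close>. With \<open>a = xu + xv + yu\<close> and \<open>b = yv\<close> one has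
  \<open>P = a + b\<close> and \<open>P \<circ> W = (a/2 + b/3)(a/2 + 2b/3) \<le> P\<^sup>2/4\<close>, so once \<open>P < 4\<close> the
  product \<open>P\<close> decays geometrically along the orbit; since every coordinate of \<open>W s\<close>
  is at most \<open>P(s)\<close>, the orbit tends to 0.
  For (b): \<open>x' \<ge> xu/2\<close> and \<open>u' \<ge> xu/2\<close>, so \<open>q = xu/4\<close> satisfies \<open>q' \<ge> q\<^sup>2\<close>; if \<open>q > 1\<close>
  then \<open>q\<close> tends to infinity and so does \<open>x' \<ge> 2q\<close>. The pairs \<open>(y, u)\<close> and \<open>(y, v)\<close>
  are handled in the same way with \<open>yu/16\<close> and \<open>yv/9\<close>.
\<close>

lemma quadratic_recurrence_tendsto_zero:
  fixes p :: "nat \<Rightarrow> real" and a :: real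
  assumes nonneg: "\<And>n. p n \<ge> 0"
    and step: "\<And>n. p (Suc n) \<le> p n ^ 2 / a"
    and small: "p k < a"
  shows "p \<longlonglongrightarrow> 0"
proof -
  define r where "r = p k / a"
  have a_pos: "a > 0" using nonneg[of k] small by linarith
  have r: "0 \<le> r" "r < 1" using nonneg[of k] small a_pos by (auto simp: r_def)
  have decay: "p (k + m) \<le> p k * r ^ m" for m
  proof (induction m)
    case 0
    show ?case by simp
  next
    case (Suc m)
    have "p k * r ^ m \<le> p k" using r nonneg[of k] by (simp add: mult_left_le power_le_one)
    with Suc.IH have "p (k + m) / a \<le> r" using a_pos by (simp add: r_def divide_right_mono)
    have "p (k + Suc m) \<le> p (k + m) * (p (k + m) / a)"
      using step[of "k + m"] by (simp add: power2_eq_square)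
    also have "\<dots> \<le> p (k + m) * r"
      using \<open>p (k + m) / a \<le> r\<close> nonneg by (rule mult_left_mono)
    also have "\<dots> \<le> p k * r ^ m * r" using Suc.IH r by (simp add: mult_right_mono)
    finally show ?case by (simp add: mult_ac)
  qed
  have "(\<lambda>m. p k * r ^ m) \<longlonglongrightarrow> 0"
    using r by (intro tendsto_mult_right_zero LIMSEQ_power_zero) auto
  then have "(\<lambda>m. p (m + k)) \<longlonglongrightarrow> 0"
    by (rule tendsto_sandwich[rotated 2, OF tendsto_const])
       (use nonneg decay in \<open>auto simp: add.commute\<close>)
  then show ?thesis by (rule LIMSEQ_offset)
qed

lemma squaring_recurrence_at_top:
  fixes q :: "nat \<Rightarrow> real"
  assumes start: "q 0 > 1" and step: "\<And>n. q (Suc n) \<ge> q n ^ 2"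
  shows "filterlim q at_top sequentially"
proof -
  have bound: "q n \<ge> q 0 ^ Suc n" for n
  proof (induction n)
    case 0
    show ?case by simp
  next
    case (Suc n)
    have "q 0 \<le> q 0 ^ Suc n" using start by (simp add: self_le_power del: power_Suc)
    with Suc.IH have "q 0 \<le> q n" by linarith
    have "q 0 ^ Suc (Suc n) \<le> q n * q 0"
      using Suc.IH start by (simp add: mult.commute mult_right_mono)
    also have "\<dots> \<le> q n * q n"
      using \<open>q 0 \<le> q n\<close> start by (intro mult_left_mono) auto
    also have "\<dots> \<le> q (Suc n)" using step[of n] by (simp add: power2_eq_square)
    finally show ?case .
  qed
  have "filterlim (\<lambda>n. norm (q 0 ^ n)) at_top sequentially"
    using start by (intro filterlim_at_infinity_imp_norm_at_top filterlim_realpow_sequentially_gt1) auto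
  then have "filterlim (\<lambda>n. q 0 ^ Suc n) at_top sequentially"
    unfolding filterlim_sequentially_Suc[of "\<lambda>n. q 0 ^ n"] using start by simp
  then show ?thesis by (rule filterlim_at_top_mono) (use bound in auto)
qed

lemma product_recurrence_at_top:
  fixes a b :: "nat \<Rightarrow> real" and \<kappa> :: real
  assumes \<kappa>: "\<kappa> > 0" and nonneg: "\<And>n. a n \<ge> 0" "\<And>n. b n \<ge> 0"
    and step: "\<And>n. a (Suc n) \<ge> a n * b n / \<kappa>" "\<And>n. b (Suc n) \<ge> a n * b n / \<kappa>"
    and start: "a 0 * b 0 > \<kappa>\<^sup>2"
  shows "filterlim a at_top sequentially"
proof -
  define q where "q n = a n * b n / \<kappa>\<^sup>2" for n
  have "q (Suc n) \<ge> q n ^ 2" for n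
  proof -
    have "q n ^ 2 = (a n * b n / \<kappa>) * (a n * b n / \<kappa>) / \<kappa>\<^sup>2"
      by (simp add: q_def power2_eq_square)
    also have "\<dots> \<le> a (Suc n) * b (Suc n) / \<kappa>\<^sup>2"
      using step nonneg \<kappa> by (intro divide_right_mono mult_mono) auto
    finally show ?thesis by (simp add: q_def)
  qed
  moreover have "q 0 > 1" using start \<kappa> by (simp add: q_def)
  ultimately have "filterlim q at_top sequentially" by (rule squaring_recurrence_at_top[rotated])
  then have "filterlim (\<lambda>n. \<kappa> * q n) at_top sequentially"
    using \<kappa> by (intro filterlim_tendsto_pos_mult_at_top[OF tendsto_const])
  then have "filterlim (\<lambda>n. a (Suc n)) at_top sequentially"
    by (rule filterlim_at_top_mono)
       (use step(1) \<kappa> in \<open>auto simp: q_def power2_eq_square\<close>)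
  then show ?thesis by (simp add: filterlim_sequentially_Suc)
qed

definition nonneg_state :: "state \<Rightarrow> bool" where
  "nonneg_state s \<longleftrightarrow> (\<forall>c \<in> {cx, cy, cu, cv}. c s \<ge> 0)"

definition sums_product :: "state \<Rightarrow> real" where
  "sums_product s = (cx s + cy s) * (cu s + cv s)"

lemma state_eq_coords: "s = (cx s, cy s, cu s, cv s)"
  by (simp add: cx_def cy_def cu_def cv_def)

lemma coords_W:
  "cx (W s) = cx s * cu s / 2 + cy s * cu s / 4"
  "cy (W s) = cx s * cv s / 2 + cy s * cu s / 4 + cy s * cv s / 3"
  "cu (W s) = cx s * cu s / 2 + cx s * cv s / 2 + cy s * cu s / 4 + cy s * cv s / 3"
  "cv (W s) = cy s * cu s / 4 + cy s * cv s / 3"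
  by (cases s; simp add: W_def cx_def cy_def cu_def cv_def)+

lemma nonneg_state_W: "nonneg_state s \<Longrightarrow> nonneg_state (W s)"
  unfolding nonneg_state_def by (simp add: coords_W)

lemma nonneg_state_funpow_W: "nonneg_state s \<Longrightarrow> nonneg_state ((W ^^ n) s)"
  by (induction n) (auto intro: nonneg_state_W)

lemma sums_product_nonneg: "nonneg_state s \<Longrightarrow> sums_product s \<ge> 0"
  unfolding nonneg_state_def sums_product_def by simp

lemma sums_product_W_le:
  assumes "nonneg_state s"
  shows "sums_product (W s) \<le> sums_product s ^ 2 / 4"
proof -
  define a where "a = cx s * cu s + cx s * cv s + cy s * cu s"
  define b where "b = cy s * cv s"
  have "b \<ge> 0" using assms by (simp add: nonneg_state_def b_def)
  have "sums_product (W s) = (a/2 + b/3) * (a/2 + 2*b/3)"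
    by (simp add: sums_product_def coords_W a_def b_def field_simps)
  also have "\<dots> \<le> (a + b)\<^sup>2 / 4"
    using \<open>b \<ge> 0\<close> by (simp add: power2_eq_square algebra_simps)
  also have "a + b = sums_product s"
    by (simp add: sums_product_def a_def b_def algebra_simps)
  finally show ?thesis .
qed

lemma coord_W_le_sums_product:
  assumes "nonneg_state s" "c \<in> {cx, cy, cu, cv}"
  shows "c (W s) \<le> sums_product s"
proof -
  have "sums_product s = cx s * cu s + cx s * cv s + cy s * cu s + cy s * cv s"
    by (simp add: sums_product_def algebra_simps)
  moreover have "cx s * cu s \<ge> 0" "cx s * cv s \<ge> 0" "cy s * cu s \<ge> 0" "cy s * cv s \<ge> 0"
    using assms(1) by (simp_all add: nonneg_state_def)
  ultimately show ?thesis
    using assms(2) by (auto simp: coords_W)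
qed

lemma coords_W_lower_bounds:
  assumes "nonneg_state s"
  shows "cx (W s) \<ge> cx s * cu s / 2" "cu (W s) \<ge> cx s * cu s / 2"
    and "cy (W s) \<ge> cy s * cu s / 4" "cu (W s) \<ge> cy s * cu s / 4"
    and "cy (W s) \<ge> cy s * cv s / 3" "cv (W s) \<ge> cy s * cv s / 3"
  using assms by (auto simp: coords_W nonneg_state_def)

lemma orbit_tendsto_zero:
  assumes s: "nonneg_state s" and small: "sums_product ((W ^^ k) s) < 4"
  shows "(\<lambda>n. (W ^^ n) s) \<longlonglongrightarrow> (0, 0, 0, 0)"
proof -
  have nonneg: "nonneg_state ((W ^^ n) s)" for n using s by (rule nonneg_state_funpow_W)
  have "(\<lambda>n. sums_product ((W ^^ n) s)) \<longlonglongrightarrow> 0"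
    using sums_product_nonneg[OF nonneg] sums_product_W_le[OF nonneg] small
    by (intro quadratic_recurrence_tendsto_zero[where a = 4]) auto
  then have shifted: "(\<lambda>n. c ((W ^^ Suc n) s)) \<longlonglongrightarrow> 0" if "c \<in> {cx, cy, cu, cv}" for c
    by (rule tendsto_sandwich[rotated 2, OF tendsto_const])
       (use nonneg_state_W[OF nonneg] coord_W_le_sums_product[OF nonneg that] that
        in \<open>auto simp: nonneg_state_def\<close>)
  have "(\<lambda>n. c ((W ^^ n) s)) \<longlonglongrightarrow> 0" if "c \<in> {cx, cy, cu, cv}" for c
    using shifted[OF that] by (rule LIMSEQ_imp_Suc)
  then show ?thesis
    by (subst state_eq_coords) (intro tendsto_Pair; simp)
qed

lemma orbit_coord_at_top:
  assumes s: "nonneg_state s"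
    and large: "max (cx s * cu s / 4) (max (cy s * cu s / 16) (cy s * cv s / 9)) > 1"
  shows "\<exists>c \<in> {cx, cy, cu, cv}. filterlim (\<lambda>n. c ((W ^^ n) s)) at_top sequentially"
proof -
  have nonneg: "nonneg_state ((W ^^ n) s)" for n using s by (rule nonneg_state_funpow_W)
  then have coord_nonneg: "c ((W ^^ n) s) \<ge> 0" if "c \<in> {cx, cy, cu, cv}" for c n
    using that by (auto simp: nonneg_state_def)
  note bounds = coords_W_lower_bounds[OF nonneg]
  consider "cx s * cu s > 2\<^sup>2" | "cy s * cu s > 4\<^sup>2" | "cy s * cv s > 3\<^sup>2"
    using large by (auto simp: less_max_iff_disj)
  then show ?thesis
  proof cases
    case 1
    then have "filterlim (\<lambda>n. cx ((W ^^ n) s)) at_top sequentially"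
      by (intro product_recurrence_at_top[where b = "\<lambda>n. cu ((W ^^ n) s)" and \<kappa> = 2])
         (use bounds in \<open>auto simp: coord_nonneg\<close>)
    then show ?thesis by blast
  next
    case 2
    then have "filterlim (\<lambda>n. cy ((W ^^ n) s)) at_top sequentially"
      by (intro product_recurrence_at_top[where b = "\<lambda>n. cu ((W ^^ n) s)" and \<kappa> = 4])
         (use bounds in \<open>auto simp: coord_nonneg\<close>)
    then show ?thesis by blast
  next
    case 3
    then have "filterlim (\<lambda>n. cy ((W ^^ n) s)) at_top sequentially"
      by (intro product_recurrence_at_top[where b = "\<lambda>n. cv ((W ^^ n) s)" and \<kappa> = 3])
         (use bounds in \<open>auto simp: coord_nonneg\<close>)
    then show ?thesis by blast
  qed
qed

theorem lemma3p5:
  fixes x y u v :: real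
  assumes "x \<ge> 0" "y \<ge> 0" "u \<ge> 0" "v \<ge> 0" "x + y + u + v > 4"
  shows "((\<exists>k::nat. (cx ((W ^^ k) (x, y, u, v)) + cy ((W ^^ k) (x, y, u, v))) *
                     (cu ((W ^^ k) (x, y, u, v)) + cv ((W ^^ k) (x, y, u, v))) < 4)
            \<longrightarrow> (\<lambda>n. (W ^^ n) (x, y, u, v)) \<longlonglongrightarrow> (0, 0, 0, 0))
       \<and> (max (x * u/4) (max (y * u/16) (y * v/9)) > 1
            \<longrightarrow> (\<exists>c \<in> {cx, cy, cu, cv}.
                   filterlim (\<lambda>n. c ((W ^^ n) (x, y, u, v))) at_top sequentially))"
proof -
  have s: "nonneg_state (x, y, u, v)"
    using assms by (simp add: nonneg_state_def cx_def cy_def cu_def cv_def)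
  have coords: "cx (x, y, u, v) = x" "cy (x, y, u, v) = y" "cu (x, y, u, v) = u" "cv (x, y, u, v) = v"
    by (simp_all add: cx_def cy_def cu_def cv_def)
  show ?thesis
    using orbit_tendsto_zero[OF s] orbit_coord_at_top[OF s]
    unfolding sums_product_def coords by blast
qed

end
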